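(* Let $\widetilde L$ be a standardized Laplacian matrix of order $n$ and $P=\widetilde L+J$. Then both $\widetilde L$ and $P$ are semiconvergent, i.e., the limits $\lim_{k\to\infty}\widetilde L^k$ and $\lim_{k\to\infty}P^k$ exist.
   Context: A standardized Laplacian matrix of order $n$ is a real $n\times n$ matrix whose row sums are all $0$ and whose off-diagonal entries are nonpositive with absolute value at most $1/n$. $J$ is the $n\times n$ matrix with all entries $1/n$. *)

theory Defs
  imports "HOL-Analysis.Analysis"
begin

text \<open>Matrices of order n are represented as real^'n^'n, with n = CARD('n).\<close>

primrec matpow :: "real^'n^'n \<Rightarrow> nat \<Rightarrow> real^'n^'n" where
  "matpow A 0 = mat 1"
| "matpow A (Suc k) = A ** matpow A k"

definition standardized_laplacian :: "real^'n^'n \<Rightarrow> bool" where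
  "standardized_laplacian L \<longleftrightarrow>
     (\<forall>i. (\<Sum>j\<in>UNIV. L $ i $ j) = 0) \<and>
     (\<forall>i j. i \<noteq> j \<longrightarrow> L $ i $ j \<le> 0 \<and> \<bar>L $ i $ j\<bar> \<le> 1 / real CARD('n))"

definition Jmat :: "real^'n^'n" where
  "Jmat = (\<chi> i j. 1 / real CARD('n))"

definition semiconvergent :: "real^'n^'n \<Rightarrow> bool" where
  "semiconvergent A \<longleftrightarrow> convergent (\<lambda>k. matpow A k)"

end

theory Submission
  imports Defs "HOL-Real_Asymp.Real_Asymp"
begin

(* Let L be a standardized Laplacian of order n, q = 1/n and P = L + J.  The
   entries of P are nonnegative with row sums 1, and every diagonal entry of P
   is at least q.  Hence P = q I + R with R entrywise nonnegative and all row
   sums of R equal to 1 - q: P is a "lazy" stochastic matrix.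

   1. Binomial smoothing.  Expanding P^k = sum_j C(k,j) q^(k-j) R^j, the
      increment P^(k+1) - P^k is bounded entrywise by the mean absolute
      deviation of a binomial distribution divided by (k+1) q, which is
      O(1/sqrt k) by the variance formula.  So the increments tend to 0.
   2. Convergence criterion.  If the powers of a matrix are bounded and their
      increments tend to 0, every limit point E of the powers satisfies
      P E = E = E P; two limit points E, E' then satisfy E = E E' = E', so the
      bounded sequence of powers has a unique limit point and converges.
   3. Since L J = 0, one has L^(k+1) = P^(k+1) - J P^k, so the powers of L
      converge as well. *)

lemma matrix_mult_entry: "(A ** B) $ i $ j = (\<Sum>k\<in>UNIV. A $ i $ k * B $ k $ j)"
  by (simp add: matrix_matrix_mult_def)

lemma matrix_diff_ldistrib:
  fixes A B C :: "real^'n^'n"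
  shows "A ** (B - C) = A ** B - A ** C"
  by (simp add: vec_eq_iff matrix_mult_entry algebra_simps sum_subtractf)

lemma matrix_add_rdistrib:
  fixes A B C :: "real^'n^'n"
  shows "(A + B) ** C = A ** C + B ** C"
  by (simp add: vec_eq_iff matrix_mult_entry algebra_simps sum.distrib)

lemma matrix_mult_sum_scaleR:
  fixes A :: "real^'n^'n"
  shows "A ** (\<Sum>j\<in>S. c j *\<^sub>R B j) = (\<Sum>j\<in>S. c j *\<^sub>R (A ** B j))"
  by (simp add: vec_eq_iff matrix_mult_entry sum_distrib_left sum_component mult_ac
      sum.swap[of _ UNIV S])

lemma matpow_commute: "matpow A k ** A = A ** matpow A k"
  by (induction k) (simp_all add: matrix_mul_assoc[symmetric])

lemma tendsto_matrix_mult_left: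
  fixes X :: "'b \<Rightarrow> real^'n^'n"
  assumes "(X \<longlongrightarrow> E) F"
  shows "((\<lambda>i. A ** X i) \<longlongrightarrow> A ** E) F"
  unfolding matrix_matrix_mult_def by (intro tendsto_intros assms)

lemma tendsto_matrix_mult_right:
  fixes X :: "'b \<Rightarrow> real^'n^'n"
  assumes "(X \<longlongrightarrow> E) F"
  shows "((\<lambda>i. X i ** A) \<longlongrightarrow> E ** A) F"
  unfolding matrix_matrix_mult_def by (intro tendsto_intros assms)

lemma norm_matrix_le_sum_abs:
  fixes M :: "real^'n^'n"
  shows "norm M \<le> (\<Sum>i\<in>UNIV. \<Sum>j\<in>UNIV. \<bar>M$i$j\<bar>)"
proof -
  have "norm M \<le> (\<Sum>i\<in>UNIV. norm (M$i))"
    unfolding norm_vec_def by (rule L2_set_le_sum) simp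
  also have "\<dots> \<le> (\<Sum>i\<in>UNIV. \<Sum>j\<in>UNIV. \<bar>M$i$j\<bar>)"
    by (intro sum_mono norm_le_l1_cart)
  finally show ?thesis .
qed

section \<open>Nonnegative matrices with constant row sums\<close>

definition nonneg_rowsum :: "real^'n^'n \<Rightarrow> real \<Rightarrow> bool" where
  "nonneg_rowsum A a \<longleftrightarrow> (\<forall>i j. 0 \<le> A$i$j) \<and> (\<forall>i. (\<Sum>j\<in>UNIV. A$i$j) = a)"

lemma nonneg_rowsum_mult:
  assumes A: "nonneg_rowsum A a" and B: "nonneg_rowsum B b"
  shows "nonneg_rowsum (A ** B) (a * b)"
  unfolding nonneg_rowsum_def
proof (intro conjI allI)
  fix i j
  show "0 \<le> (A ** B)$i$j"
    using A B by (auto simp: nonneg_rowsum_def matrix_mult_entry intro!: sum_nonneg)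
next
  fix i
  have "(\<Sum>j\<in>UNIV. (A ** B)$i$j) = (\<Sum>j\<in>UNIV. \<Sum>k\<in>UNIV. A$i$k * B$k$j)"
    by (simp add: matrix_mult_entry)
  also have "\<dots> = (\<Sum>k\<in>UNIV. \<Sum>j\<in>UNIV. A$i$k * B$k$j)"
    by (rule sum.swap)
  also have "\<dots> = (\<Sum>k\<in>UNIV. A$i$k * b)"
    using B by (simp add: nonneg_rowsum_def sum_distrib_left[symmetric])
  also have "\<dots> = a * b"
    using A by (simp add: nonneg_rowsum_def sum_distrib_right[symmetric])
  finally show "(\<Sum>j\<in>UNIV. (A ** B)$i$j) = a * b" .
qed

lemma nonneg_rowsum_matpow:
  assumes "nonneg_rowsum A a"
  shows "nonneg_rowsum (matpow A k) (a ^ k)"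
proof (induction k)
  case 0
  have "(\<Sum>j\<in>UNIV. (mat 1 :: real^'n^'n)$i$j) = 1" for i
    by (simp add: mat_def)
  then show ?case by (simp add: nonneg_rowsum_def mat_def)
next
  case (Suc k)
  show ?case using nonneg_rowsum_mult[OF assms Suc] by simp
qed

lemma nonneg_rowsum_entry_le:
  assumes "nonneg_rowsum A a"
  shows "A$i$j \<le> a"
proof -
  have "A$i$j \<le> (\<Sum>j\<in>UNIV. A$i$j)"
    using assms by (intro member_le_sum) (auto simp: nonneg_rowsum_def)
  thus ?thesis using assms by (simp add: nonneg_rowsum_def)
qed

lemma stochastic_matpow_bounded:
  fixes P :: "real^'n^'n"
  assumes "nonneg_rowsum P 1"
  shows "bounded (range (matpow P))"
proof -
  have "norm (matpow P k) \<le> real CARD('n) * real CARD('n)" for k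
  proof -
    have Pk: "nonneg_rowsum (matpow P k) 1"
      using nonneg_rowsum_matpow[OF assms, of k] by simp
    have "\<bar>matpow P k$i$j\<bar> \<le> 1" for i j
      using nonneg_rowsum_entry_le[OF Pk] Pk by (simp add: nonneg_rowsum_def)
    hence "(\<Sum>i\<in>UNIV. \<Sum>j\<in>UNIV. \<bar>matpow P k$i$j\<bar>) \<le> (\<Sum>i\<in>(UNIV::'n set). \<Sum>j\<in>(UNIV::'n set). (1::real))"
      by (intro sum_mono) simp
    with norm_matrix_le_sum_abs[of "matpow P k"] show ?thesis by simp
  qed
  thus ?thesis unfolding bounded_iff by blast
qed

lemma lazy_nonneg_rowsum:
  fixes R :: "real^'n^'n"
  assumes R: "nonneg_rowsum R (1 - q)" and q: "0 \<le> q"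
  shows "nonneg_rowsum (q *\<^sub>R mat 1 + R) 1"
proof -
  have "(\<Sum>j\<in>UNIV. (q *\<^sub>R mat 1 + R)$i$j) = 1" for i
    using R by (simp add: nonneg_rowsum_def sum.distrib mat_def if_distrib[of "\<lambda>x. q * x"])
  moreover have "0 \<le> (q *\<^sub>R mat 1 + R)$i$j" for i j
    using R q by (simp add: nonneg_rowsum_def mat_def)
  ultimately show ?thesis by (simp add: nonneg_rowsum_def)
qed

section \<open>Binomial means\<close>

lemma pascal_sum:
  fixes g :: "nat \<Rightarrow> 'a::real_vector"
  shows "(\<Sum>j\<le>Suc k. (real (Suc k choose j) * x^(Suc k - j)) *\<^sub>R g j)
       = x *\<^sub>R (\<Sum>j\<le>k. (real (k choose j) * x^(k - j)) *\<^sub>R g j)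
         + (\<Sum>j\<le>k. (real (k choose j) * x^(k - j)) *\<^sub>R g (Suc j))"
proof -
  have "x *\<^sub>R (\<Sum>j\<le>k. (real (k choose j) * x^(k - j)) *\<^sub>R g j)
      = (\<Sum>j\<le>k. (real (k choose j) * x^(Suc k - j)) *\<^sub>R g j)"
    unfolding scaleR_sum_right by (rule sum.cong) (auto simp: Suc_diff_le mult_ac)
  also have "\<dots> = (\<Sum>j\<le>Suc k. (real (k choose j) * x^(Suc k - j)) *\<^sub>R g j)"
    by simp
  also have "\<dots> = x^(Suc k) *\<^sub>R g 0 + (\<Sum>j\<le>k. (real (k choose Suc j) * x^(k - j)) *\<^sub>R g (Suc j))"
    by (subst sum.atMost_Suc_shift) simp
  finally have 1: "x *\<^sub>R (\<Sum>j\<le>k. (real (k choose j) * x^(k - j)) *\<^sub>R g j) = \<dots>" .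
  have "(\<Sum>j\<le>Suc k. (real (Suc k choose j) * x^(Suc k - j)) *\<^sub>R g j)
     = x^(Suc k) *\<^sub>R g 0 + (\<Sum>j\<le>k. (real (Suc k choose Suc j) * x^(k - j)) *\<^sub>R g (Suc j))"
    by (subst sum.atMost_Suc_shift) simp
  also have "\<dots> = x^(Suc k) *\<^sub>R g 0 + (\<Sum>j\<le>k. (real (k choose Suc j) * x^(k - j)) *\<^sub>R g (Suc j))
      + (\<Sum>j\<le>k. (real (k choose j) * x^(k - j)) *\<^sub>R g (Suc j))"
    by (simp add: sum.distrib[symmetric] algebra_simps scaleR_add_left)
  finally show ?thesis using 1 by simp
qed

text \<open>\<open>binom_mean p m f\<close> is the expectation of \<open>f X\<close> for a binomially
  distributed random variable \<open>X\<close> with parameters \<open>m\<close> and \<open>p\<close>.\<close>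

definition binom_mean :: "real \<Rightarrow> nat \<Rightarrow> (nat \<Rightarrow> real) \<Rightarrow> real" where
  "binom_mean p m f = (\<Sum>j\<le>m. (real (m choose j) * (1-p)^(m - j)) * (p^j * f j))"

text \<open>Conditioning on the last trial.\<close>

lemma binom_mean_Suc:
  "binom_mean p (Suc m) f = (1-p) * binom_mean p m f + p * binom_mean p m (\<lambda>j. f (Suc j))"
proof -
  let ?shifted = "\<Sum>j\<le>m. (real (m choose j) * (1-p)^(m - j)) * (p^Suc j * f (Suc j))"
  have "binom_mean p (Suc m) f = (1-p) * binom_mean p m f + ?shifted"
    unfolding binom_mean_def using pascal_sum[of m "1-p" "\<lambda>j. p^j * f j"] by simp
  also have "?shifted = p * binom_mean p m (\<lambda>j. f (Suc j))"
    unfolding binom_mean_def sum_distrib_left by (rule sum.cong) auto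
  finally show ?thesis .
qed

lemma binom_mean_add: "binom_mean p m (\<lambda>j. f j + g j) = binom_mean p m f + binom_mean p m g"
  unfolding binom_mean_def by (simp add: sum.distrib algebra_simps)

lemma binom_mean_cmult: "binom_mean p m (\<lambda>j. c * f j) = c * binom_mean p m f"
  unfolding binom_mean_def by (simp add: sum_distrib_left algebra_simps)

lemma binom_mean_1: "binom_mean p m (\<lambda>j. 1) = 1"
proof (induction m)
  case 0 then show ?case by (simp add: binom_mean_def)
next
  case (Suc m) then show ?case by (simp add: binom_mean_Suc)
qed

lemma binom_mean_const: "binom_mean p m (\<lambda>j. c) = c"
  using binom_mean_cmult[of p m c "\<lambda>j. 1"] binom_mean_1[of p m] by simp

lemma binom_mean_id: "binom_mean p m (\<lambda>j. real j) = m * p"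
proof (induction m)
  case 0 then show ?case by (simp add: binom_mean_def)
next
  case (Suc m)
  have h: "binom_mean p m (\<lambda>j. real (Suc j)) = m*p + 1"
    using binom_mean_add[of p m "\<lambda>j. 1" "\<lambda>j. real j"] Suc.IH binom_mean_1[of p m] by (simp add: of_nat_Suc)
  show ?case by (simp only: binom_mean_Suc h Suc.IH) (simp add: algebra_simps)
qed

lemma binom_mean_sq: "binom_mean p m (\<lambda>j. (real j)^2) = m * p * (1-p) + (m*p)^2"
proof (induction m)
  case 0 then show ?case by (simp add: binom_mean_def)
next
  case (Suc m)
  have e: "(\<lambda>j. (real (Suc j))^2) = (\<lambda>j. (real j)^2 + (2 * real j + 1))"
    by (auto simp: power2_eq_square algebra_simps)
  have "binom_mean p m (\<lambda>j. (real (Suc j))^2)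
      = binom_mean p m (\<lambda>j. (real j)^2) + (2 * binom_mean p m (\<lambda>j. real j) + binom_mean p m (\<lambda>j. 1))"
    by (simp only: e binom_mean_add binom_mean_cmult)
  also have "\<dots> = m * p * (1-p) + (m*p)^2 + 2*(m*p) + 1"
    by (simp only: Suc.IH binom_mean_id binom_mean_1)
  finally have h: "binom_mean p m (\<lambda>j. (real (Suc j))^2) = \<dots>" .
  show ?case by (simp only: binom_mean_Suc h Suc.IH) (simp add: algebra_simps power2_eq_square)
qed

lemma binom_mean_var: "binom_mean p m (\<lambda>j. (real j - m*p)^2) = m * p * (1-p)"
proof -
  have e: "(\<lambda>j. (real j - m*p)^2) = (\<lambda>j. (real j)^2 + ((-2*(m*p)) * real j + (m*p)^2))"
    by (auto simp: power2_eq_square algebra_simps)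
  show ?thesis unfolding e binom_mean_add binom_mean_cmult binom_mean_id binom_mean_sq binom_mean_const
    by (simp add: power2_eq_square algebra_simps)
qed

lemma binom_mean_mono:
  assumes "0 \<le> p" "p \<le> 1" "\<And>j. f j \<le> g j"
  shows "binom_mean p m f \<le> binom_mean p m g"
  unfolding binom_mean_def using assms by (intro sum_mono mult_left_mono) auto

text \<open>The mean absolute deviation is \<open>O(\<surd>m)\<close>; it is bounded via the variance using
  \<open>\<bar>y\<bar> \<le> y\<^sup>2 / (2t) + t / 2\<close> with \<open>t = \<surd>m\<close>.\<close>

lemma binom_mean_absdev:
  assumes "0 \<le> p" "p \<le> 1" "m > 0"
  shows "binom_mean p m (\<lambda>j. \<bar>real j - m*p\<bar>) \<le> (p*(1-p) + 1) * sqrt m / 2"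
proof -
  define t where "t = sqrt m"
  have t: "t > 0" using assms by (simp add: t_def)
  have ineq: "\<bar>y\<bar> \<le> (1/(2*t)) * y^2 + t/2" for y :: real
  proof -
    have "0 \<le> (\<bar>y\<bar> - t)^2" by simp
    hence "2*\<bar>y\<bar>*t \<le> y^2 + t^2" by (simp add: power2_eq_square algebra_simps)
    thus ?thesis using t by (simp add: field_simps power2_eq_square)
  qed
  have "binom_mean p m (\<lambda>j. \<bar>real j - m*p\<bar>) \<le> binom_mean p m (\<lambda>j. (1/(2*t)) * (real j - m*p)^2 + t/2)"
    by (intro binom_mean_mono assms ineq)
  also have "\<dots> = (1/(2*t)) * (m*p*(1-p)) + t/2"
    by (simp only: binom_mean_add binom_mean_cmult binom_mean_var binom_mean_const)
  also have "\<dots> = (p*(1-p) + 1) * t / 2"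
  proof -
    have tt: "t * t = real m" unfolding t_def by simp
    show ?thesis using t by (simp add: field_simps tt[symmetric])
  qed
  finally show ?thesis by (simp add: t_def)
qed

section \<open>The binomial smoothing estimate\<close>

lemma binomial_increment_term:
  assumes q: "0 < q" and p: "p = 1 - q" and j: "j \<le> Suc k"
  shows "\<bar>real (Suc k choose j) * q^(Suc k - j) - real (k choose j) * q^(k - j)\<bar> * p^j
       = (real (Suc k choose j) * (1-p)^(Suc k - j)) * (p^j * \<bar>real j - real (Suc k) * p\<bar>) / (real (Suc k) * q)"
proof (cases "j \<le> k")
  case True
  have a: "real (Suc k - j) * real (Suc k choose j) = real (Suc k) * real (k choose j)"
    using binomial_absorb_comp[of "Suc k" j] by (metis diff_Suc_1 of_nat_mult)
  have sk: "Suc k - j = Suc (k - j)" using True by simp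
  have r: "real (Suc k - j) = real (Suc k) - real j" using True by simp
  have b: "real (k choose j) = real (Suc k choose j) * (real (Suc k) - real j) / real (Suc k)"
    using a[unfolded r] by (simp add: field_simps)
  have qk: "q + q * real k > 0" using q by (simp add: add_pos_nonneg)
  have "real (k choose j) * q^(k - j) = real (Suc k choose j) * q^(Suc k - j) * (real (Suc k) - real j) / (real (Suc k) * q)"
    using q qk unfolding sk b by (simp add: field_simps)
  hence eq: "real (Suc k choose j) * q^(Suc k - j) - real (k choose j) * q^(k - j)
      = real (Suc k choose j) * q^(Suc k - j) * (real j - real (Suc k) * p) / (real (Suc k) * q)"
    using q qk by (simp add: field_simps p)
  have X: "real (Suc k choose j) * q^(Suc k - j) \<ge> 0" using q by simp
  have mq: "real (Suc k) * q > 0" using q by simp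
  have "\<bar>real (Suc k choose j) * q^(Suc k - j) - real (k choose j) * q^(k - j)\<bar> * p^j
     = (real (Suc k choose j) * q^(Suc k - j) * \<bar>real j - real (Suc k) * p\<bar> / (real (Suc k) * q)) * p^j"
    unfolding eq using X mq q by (simp add: abs_mult abs_divide)
  moreover have pq: "1 - p = q" using p by simp
  ultimately show ?thesis by (simp add: pq)
next
  case False
  hence jk: "j = Suc k" using j by simp
  have "real (Suc k) - real (Suc k) * p = real (Suc k) * q" by (simp add: p algebra_simps)
  moreover have "real (Suc k) * q > 0" using q by simp
  ultimately have "\<bar>real (Suc k) - real (Suc k) * p\<bar> = real (Suc k) * q" by simp
  moreover have c0: "(k choose Suc k) = 0" by (simp add: binomial_eq_0)
  ultimately show ?thesis using q unfolding jk by (simp add: c0)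
qed

lemma binomial_increment_bound:
  assumes q: "0 < q" "q \<le> 1" and p: "p = 1 - q"
  shows "(\<Sum>j\<le>Suc k. \<bar>real (Suc k choose j) * q^(Suc k - j) - real (k choose j) * q^(k - j)\<bar> * p^j)
         \<le> (p*q + 1) / (2 * q * sqrt (real (Suc k)))"
proof -
  have "(\<Sum>j\<le>Suc k. \<bar>real (Suc k choose j) * q^(Suc k - j) - real (k choose j) * q^(k - j)\<bar> * p^j)
     = binom_mean p (Suc k) (\<lambda>j. \<bar>real j - real (Suc k) * p\<bar>) / (real (Suc k) * q)"
    unfolding binom_mean_def sum_divide_distrib
    by (rule sum.cong) (use binomial_increment_term[OF q(1) p] in auto)
  also have "\<dots> \<le> ((p*(1-p) + 1) * sqrt (real (Suc k)) / 2) / (real (Suc k) * q)"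
    using binom_mean_absdev[of p "Suc k"] q p by (intro divide_right_mono) auto
  also have "\<dots> = (p*q + 1) / (2 * q * sqrt (real (Suc k)))"
  proof -
    have s: "sqrt (real (Suc k)) * sqrt (real (Suc k)) = real (Suc k)" by simp
    have sp: "sqrt (real (Suc k)) > 0" by simp
    have pq: "1 - p = q" using p by simp
    have cancel: "\<And>a s q::real. s > 0 \<Longrightarrow> q > 0 \<Longrightarrow> (a * s / 2) / ((s * s) * q) = a / (2 * q * s)"
      by (simp add: field_simps)
    show ?thesis unfolding pq using cancel[OF sp q(1), of "p*q+1"] s by simp
  qed
  finally show ?thesis .
qed

text \<open>Binomial expansion of the powers of \<open>q I + R\<close> (the two summands commute).\<close>

lemma matpow_lazy_expansion:
  fixes R :: "real^'n^'n"
  shows "matpow (q *\<^sub>R mat 1 + R) k = (\<Sum>j\<le>k. (real (k choose j) * q^(k - j)) *\<^sub>R matpow R j)"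
proof (induction k)
  case 0
  then show ?case by simp
next
  case (Suc k)
  let ?P = "q *\<^sub>R mat 1 + R"
  have "matpow ?P (Suc k) = q *\<^sub>R matpow ?P k + R ** matpow ?P k"
    by (simp add: matrix_add_rdistrib scalar_matrix_assoc[symmetric])
  also have "R ** matpow ?P k = (\<Sum>j\<le>k. (real (k choose j) * q^(k - j)) *\<^sub>R matpow R (Suc j))"
    by (simp add: Suc matrix_mult_sum_scaleR)
  finally show ?case using pascal_sum[of k q "matpow R"] Suc by simp
qed

text \<open>The increments of the powers of a lazy stochastic matrix \<open>P = q I + R\<close>
  decay like \<open>1/\<surd>k\<close>: by the expansion above, each entry of \<open>P\<^bsup>k+1\<^esup> - P\<^sup>k\<close> is a
  combination of the entries of \<open>R\<^sup>j \<le> (1 - q)\<^sup>j\<close> with the weight differences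
  controlled by \<open>binomial_increment_bound\<close>.\<close>

lemma lazy_increment_bound:
  fixes R :: "real^'n^'n"
  assumes R: "nonneg_rowsum R (1 - q)" and q: "0 < q" "q \<le> 1"
    and P: "P = q *\<^sub>R mat 1 + R"
  shows "\<bar>(matpow P (Suc k) - matpow P k)$i$l\<bar> \<le> ((1 - q) * q + 1) / (2 * q * sqrt (real (Suc k)))"
proof -
  define p where "p = 1 - q"
  define w where "w j = real (Suc k choose j) * q^(Suc k - j) - real (k choose j) * q^(k - j)" for j
  have Rpow: "nonneg_rowsum (matpow R j) (p ^ j)" for j
    using nonneg_rowsum_matpow[OF R] by (simp add: p_def)
  have "matpow P k = (\<Sum>j\<le>Suc k. (real (k choose j) * q^(k - j)) *\<^sub>R matpow R j)"
    by (simp add: P matpow_lazy_expansion binomial_eq_0)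
  hence "matpow P (Suc k) - matpow P k = (\<Sum>j\<le>Suc k. w j *\<^sub>R matpow R j)"
    by (simp only: P matpow_lazy_expansion[of q R "Suc k"] w_def scaleR_diff_left sum_subtractf)
  hence "(matpow P (Suc k) - matpow P k)$i$l = (\<Sum>j\<le>Suc k. w j * matpow R j$i$l)"
    by (simp only: sum_component vector_scaleR_component) simp
  hence "\<bar>(matpow P (Suc k) - matpow P k)$i$l\<bar> \<le> (\<Sum>j\<le>Suc k. \<bar>w j * matpow R j$i$l\<bar>)"
    by (simp only: sum_abs)
  also have "\<dots> = (\<Sum>j\<le>Suc k. \<bar>w j\<bar> * matpow R j$i$l)"
    using Rpow by (intro sum.cong refl) (simp add: nonneg_rowsum_def abs_mult)
  also have "\<dots> \<le> (\<Sum>j\<le>Suc k. \<bar>w j\<bar> * p^j)"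
    using nonneg_rowsum_entry_le[OF Rpow] by (intro sum_mono mult_left_mono) auto
  also have "\<dots> \<le> (p * q + 1) / (2 * q * sqrt (real (Suc k)))"
    unfolding w_def by (rule binomial_increment_bound[OF q p_def])
  finally show ?thesis by (simp add: p_def)
qed

lemma lazy_increments_vanish:
  fixes R :: "real^'n^'n"
  assumes R: "nonneg_rowsum R (1 - q)" and q: "0 < q" "q \<le> 1"
    and P: "P = q *\<^sub>R mat 1 + R"
  shows "(\<lambda>k. matpow P (Suc k) - matpow P k) \<longlonglongrightarrow> 0"
proof (intro vec_tendstoI)
  fix i l
  define c where "c = ((1 - q) * q + 1) / (2 * q)"
  have lim: "(\<lambda>k. c * inverse (sqrt (real (Suc k)))) \<longlonglongrightarrow> 0"
    by (intro tendsto_mult_right_zero) real_asymp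
  have "(\<lambda>k. (matpow P (Suc k) - matpow P k)$i$l) \<longlonglongrightarrow> 0"
  proof (rule Lim_null_comparison[OF _ lim], intro always_eventually allI)
    fix k
    have "((1 - q) * q + 1) / (2 * q * sqrt (real (Suc k))) = c * inverse (sqrt (real (Suc k)))"
      by (simp add: c_def field_simps)
    thus "norm ((matpow P (Suc k) - matpow P k)$i$l) \<le> c * inverse (sqrt (real (Suc k)))"
      using lazy_increment_bound[OF assms, of k i l] by simp
  qed
  thus "(\<lambda>k. (matpow P (Suc k) - matpow P k)$i$l) \<longlonglongrightarrow> (0::real^'n^'n)$i$l" by simp
qed

section \<open>A convergence criterion for matrix powers\<close>

lemma bounded_unique_limit_point_tendsto:
  fixes X :: "nat \<Rightarrow> 'a::heine_borel"
  assumes bnd: "bounded (range X)"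
    and unique: "\<And>r l. strict_mono r \<Longrightarrow> (X \<circ> r) \<longlonglongrightarrow> l \<Longrightarrow> l = L"
  shows "X \<longlonglongrightarrow> L"
proof (rule ccontr)
  assume "\<not> X \<longlonglongrightarrow> L"
  then obtain e where e: "e > 0" and "\<not> eventually (\<lambda>k. dist (X k) L < e) sequentially"
    unfolding tendsto_iff by blast
  hence inf: "infinite {k. e \<le> dist (X k) L}"
    by (simp add: cofinite_eq_sequentially[symmetric] eventually_cofinite not_less)
  define s where "s = enumerate {k. e \<le> dist (X k) L}"
  have s: "strict_mono s"
    using strict_mono_enumerate[OF inf] by (simp add: s_def)
  have far: "e \<le> dist (X (s i)) L" for i
    using enumerate_in_set[OF inf, of i] by (simp add: s_def)
  have "bounded (range (X \<circ> s))"
    by (rule bounded_subset[OF bnd]) auto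
  then obtain r l where r: "strict_mono r" and lim: "((X \<circ> s) \<circ> r) \<longlonglongrightarrow> l"
    using bounded_imp_convergent_subsequence by blast
  have "l = L"
    using unique[OF strict_mono_o[OF s r]] lim by (simp add: o_assoc)
  have "(\<lambda>i. dist (X (s (r i))) L) \<longlonglongrightarrow> dist l L"
    using lim by (intro tendsto_intros) (simp add: o_def)
  hence "e \<le> dist l L"
    by (rule LIMSEQ_le_const) (use far in auto)
  thus False using \<open>l = L\<close> e by simp
qed

lemma matpow_limit_point_fixed:
  fixes P :: "real^'n^'n"
  assumes incr: "(\<lambda>k. matpow P (Suc k) - matpow P k) \<longlonglongrightarrow> 0"
    and r: "strict_mono r" and lim: "(matpow P \<circ> r) \<longlonglongrightarrow> E"
  shows "P ** E = E" and "E ** P = E"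
proof -
  have lim': "(\<lambda>i. matpow P (r i)) \<longlonglongrightarrow> E"
    using lim by (simp add: o_def)
  have "(\<lambda>i. matpow P (Suc (r i)) - matpow P (r i)) \<longlonglongrightarrow> 0"
    using LIMSEQ_subseq_LIMSEQ[OF incr r] by (simp add: o_def)
  from tendsto_add[OF lim' this]
  have Suc_lim: "(\<lambda>i. matpow P (Suc (r i))) \<longlonglongrightarrow> E" by simp
  have "(\<lambda>i. P ** matpow P (r i)) \<longlonglongrightarrow> P ** E"
    by (rule tendsto_matrix_mult_left[OF lim'])
  thus "P ** E = E" using Suc_lim by (simp add: LIMSEQ_unique)
  have "(\<lambda>i. matpow P (r i) ** P) \<longlonglongrightarrow> E ** P"
    by (rule tendsto_matrix_mult_right[OF lim'])
  thus "E ** P = E" using Suc_lim by (simp add: LIMSEQ_unique matpow_commute)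
qed

text \<open>Bounded powers with vanishing increments converge: for limit points \<open>E\<close>, \<open>E'\<close>
  along subsequences \<open>r\<close>, \<open>s\<close>, passing to the limit in \<open>P\<^bsup>r i\<^esup> E' = E'\<close> and
  \<open>E P\<^bsup>s i\<^esup> = E\<close> gives \<open>E E' = E'\<close> and \<open>E E' = E\<close>.\<close>

lemma matpow_convergent_if_increments_vanish:
  fixes P :: "real^'n^'n"
  assumes bnd: "bounded (range (matpow P))"
    and incr: "(\<lambda>k. matpow P (Suc k) - matpow P k) \<longlonglongrightarrow> 0"
  shows "convergent (matpow P)"
proof -
  have absorb_left: "matpow P j ** E = E" if "P ** E = E" for j E
    by (induction j) (simp_all add: matrix_mul_assoc[symmetric] that)
  have absorb_right: "E ** matpow P j = E" if "E ** P = E" for j E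
    by (induction j) (simp_all add: matrix_mul_assoc that)
  obtain r E where r: "strict_mono r" and lim: "(matpow P \<circ> r) \<longlonglongrightarrow> E"
    using bounded_imp_convergent_subsequence[OF bnd] by blast
  have "E' = E" if s: "strict_mono s" and lim': "(matpow P \<circ> s) \<longlonglongrightarrow> E'" for s E'
  proof -
    have "(\<lambda>i. matpow P (r i) ** E') \<longlonglongrightarrow> E ** E'"
      using tendsto_matrix_mult_right[OF lim] by (simp add: o_def)
    hence "E ** E' = E'"
      using absorb_left[OF matpow_limit_point_fixed(1)[OF incr s lim']] by (simp add: LIMSEQ_const_iff)
    moreover have "(\<lambda>i. E ** matpow P (s i)) \<longlonglongrightarrow> E ** E'"
      using tendsto_matrix_mult_left[OF lim'] by (simp add: o_def)
    hence "E ** E' = E"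
      using absorb_right[OF matpow_limit_point_fixed(2)[OF incr r lim]] by (simp add: LIMSEQ_const_iff)
    ultimately show ?thesis by simp
  qed
  hence "matpow P \<longlonglongrightarrow> E"
    by (intro bounded_unique_limit_point_tendsto[OF bnd]) blast
  thus ?thesis unfolding convergent_def by blast
qed

lemma lazy_stochastic_semiconvergent:
  fixes R :: "real^'n^'n"
  assumes R: "nonneg_rowsum R (1 - q)" and q: "0 < q" "q \<le> 1"
  shows "semiconvergent (q *\<^sub>R mat 1 + R)"
  unfolding semiconvergent_def
proof (rule matpow_convergent_if_increments_vanish)
  show "bounded (range (matpow (q *\<^sub>R mat 1 + R)))"
    using lazy_nonneg_rowsum[OF R] q by (intro stochastic_matpow_bounded) simp
  show "(\<lambda>k. matpow (q *\<^sub>R mat 1 + R) (Suc k) - matpow (q *\<^sub>R mat 1 + R) k) \<longlonglongrightarrow> 0"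
    by (rule lazy_increments_vanish[OF R q refl])
qed

section \<open>Standardized Laplacians\<close>

lemma matpow_Suc_annihilator:
  fixes A B :: "real^'n^'n"
  assumes AB: "A ** B = 0"
  shows "matpow A (Suc k) = matpow (A + B) (Suc k) - B ** matpow (A + B) k"
proof (induction k)
  case 0
  then show ?case by simp
next
  case (Suc k)
  let ?X = "matpow (A + B) (Suc k)"
  have "matpow A (Suc (Suc k)) = A ** (?X - B ** matpow (A + B) k)"
    using Suc by simp
  also have "\<dots> = A ** ?X"
    by (simp add: matrix_diff_ldistrib matrix_mul_assoc AB)
  also have "\<dots> = (A + B) ** ?X - B ** ?X"
    by (simp add: matrix_add_rdistrib)
  finally show ?case by simp
qed

lemma semiconvergent_annihilator:
  fixes A B :: "real^'n^'n"
  assumes AB: "A ** B = 0" and conv: "semiconvergent (A + B)"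
  shows "semiconvergent A"
proof -
  obtain E where E: "matpow (A + B) \<longlonglongrightarrow> E"
    using conv unfolding semiconvergent_def convergent_def by blast
  have "(\<lambda>k. matpow (A + B) (Suc k) - B ** matpow (A + B) k) \<longlonglongrightarrow> E - B ** E"
    by (intro tendsto_diff LIMSEQ_Suc E tendsto_matrix_mult_left)
  hence "(\<lambda>k. matpow A (Suc k)) \<longlonglongrightarrow> E - B ** E"
    by (simp only: matpow_Suc_annihilator[OF AB])
  hence "matpow A \<longlonglongrightarrow> E - B ** E"
    by (rule LIMSEQ_imp_Suc)
  thus ?thesis unfolding semiconvergent_def convergent_def by blast
qed

lemma standardized_laplacian_mult_J:
  assumes "standardized_laplacian L"
  shows "L ** Jmat = 0"
  using assms
  by (simp add: standardized_laplacian_def vec_eq_iff matrix_mult_entry Jmat_def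
      sum_divide_distrib[symmetric])

text \<open>With \<open>q = 1/n\<close>, \<open>L + J - q I\<close> is nonnegative with row sums \<open>1 - q\<close>: the
  off-diagonal entries \<open>L\<^sub>i\<^sub>j + q\<close> lie in \<open>[0, q]\<close>, and the diagonal entries \<open>L\<^sub>i\<^sub>i\<close> are
  nonnegative because the off-diagonal entries of the zero-sum rows of \<open>L\<close> are
  nonpositive.\<close>

lemma standardized_laplacian_lazy:
  fixes L :: "real^'n^'n"
  assumes L: "standardized_laplacian L"
  defines "q \<equiv> 1 / real CARD('n)"
  shows "nonneg_rowsum (L + Jmat - q *\<^sub>R mat 1) (1 - q)"
proof -
  have rows: "(\<Sum>j\<in>UNIV. L$i$j) = 0" for i
    using L unfolding standardized_laplacian_def by blast
  have off: "- q \<le> L$i$j \<and> L$i$j \<le> 0" if "i \<noteq> j" for i j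
  proof -
    have "L$i$j \<le> 0 \<and> \<bar>L$i$j\<bar> \<le> q"
      using L that unfolding standardized_laplacian_def q_def by blast
    thus ?thesis by (auto simp: abs_le_iff)
  qed
  have diag: "0 \<le> L$i$i" for i
  proof -
    have "(\<Sum>j\<in>UNIV - {i}. L$i$j) \<le> 0"
      using off by (intro sum_nonpos) auto
    moreover have "(\<Sum>j\<in>UNIV. L$i$j) = L$i$i + (\<Sum>j\<in>UNIV - {i}. L$i$j)"
      by (simp add: sum.remove)
    ultimately show ?thesis using rows[of i] by simp
  qed
  have entry: "(L + Jmat - q *\<^sub>R mat 1)$i$j = L$i$j + (if i = j then 0 else q)" for i j
    by (simp add: Jmat_def q_def mat_def)
  have "0 \<le> (L + Jmat - q *\<^sub>R mat 1)$i$j" for i j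
    unfolding entry using off[of i j] diag[of i] by (cases "i = j") auto
  moreover have "(\<Sum>j\<in>UNIV. (L + Jmat - q *\<^sub>R mat 1)$i$j) = 1 - q" for i
  proof -
    have "(\<Sum>j\<in>UNIV. (L + Jmat - q *\<^sub>R mat 1)$i$j) = (\<Sum>j\<in>UNIV. L$i$j + q) - q"
      by (simp add: Jmat_def q_def mat_def sum_subtractf sum.distrib if_distrib[of "\<lambda>x. x / real CARD('n)"]
          cong: if_cong)
    also have "\<dots> = 1 - q"
      by (simp add: sum.distrib rows q_def)
    finally show ?thesis .
  qed
  ultimately show ?thesis by (simp add: nonneg_rowsum_def)
qed

theorem theorem6:
  fixes L :: "real^'n^'n"
  assumes "standardized_laplacian L"
  shows "semiconvergent L \<and> semiconvergent (L + Jmat)"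
proof -
  define q :: real where "q = 1 / real CARD('n)"
  have q: "0 < q" "q \<le> 1"
    by (simp_all add: q_def)
  have "L + Jmat = q *\<^sub>R mat 1 + (L + Jmat - q *\<^sub>R mat 1)"
    by simp
  moreover have "semiconvergent (q *\<^sub>R mat 1 + (L + Jmat - q *\<^sub>R mat 1))"
    using standardized_laplacian_lazy[OF assms] q
    by (intro lazy_stochastic_semiconvergent) (simp_all add: q_def)
  ultimately have P: "semiconvergent (L + Jmat)"
    by simp
  have "semiconvergent L"
    by (rule semiconvergent_annihilator[OF standardized_laplacian_mult_J[OF assms] P])
  with P show ?thesis by simp
qed

end
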